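(* Let $k,r\in\mathbb N$ with $r\ge2$, let $s_1,\dots,s_r\in\mathbb N$ with $s_i\le k$, let $H_1,\dots,H_r$ be graphs with $v(H_i)\le s_i$, and let $N\in\mathbb N$ with $N\ge r^{C(k+t)}$, where $t=\sum_i s_i$. Let $\mathbf H=(H_i)$, $\mathbf s=(s_i)$. Then for every graph $G$ on $N$ vertices with $G\in\mathcal B'(\mathbf H)\cap\mathcal E(\mathbf s)$ and every $(S,c)\in\mathbf S(G)$, there exist $U\subset S$ and non-negative integers $R_1,\dots,R_r$ with $$|U|=\delta N+\sum_{i=1}^rR_i\qquad\text{and}\qquad R_1,\dots,R_r\le\frac{p|U|}{2^9r},$$ such that for every $i\in[r]$: (a) $\mathfrak I_{H_i,G_i,G}[U]$ is $(p,R_i)$-Janson, and (b) $\mathfrak I_{H_i,G_i,G}[U\cup\{v\}]$ is not $(p,R_i+1)$-Janson for every $v\in S\setminus U$.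
   Context: Constants: $C=300$, $\delta=r^{-50}$, $p=\frac1{2^{25}k^2r^4}$. Hypergraphs are identified with their edge sets; $\mathcal G[W]=\{E\in\mathcal G:E\subset W\}$. For $\nu:\mathcal G\to\mathbb R_{\ge0}$: $e(\nu)=\sum_E\nu(E)$, $d_\nu(L)=\sum_{E\in\mathcal G,L\subset E}\nu(E)$, $\Lambda_p(\nu)=\sum_{L\subset V(\mathcal G),|L|\ge2}d_\nu(L)^2p^{-|L|}$; for $R>0$, $\mathcal G$ is $(p,R)$-Janson if some $\nu$ has $\Lambda_p(\nu)<e(\nu)^2/R$, and every hypergraph is $(p,0)$-Janson. For graphs $F,G$ and $G'\subset G$, $\mathfrak I_{F,G',G}$ is the hypergraph on $V(G)$ with edges the sets $L$ with $G'[L]=G[L]\cong F$. For a colouring $c$ with colours in $[r]$, $G_i$ is the subgraph of edges of colour $i$. $\mathcal E(\mathbf s)$: graphs $G$ such that for all $t'<t$, all graphs $F_1,\dots,F_r$ with $v(F_i)\le s_i$ and $\sum v(F_i)=t'$, every $W\subset V(G)$ with $|W|\ge(\delta/(8r))^{t-t'}v(G)$ and every $c:E(G[W])\to[r]$, some $\mathfrak I_{F_i,G_i,G}[W]$ is $(p,p|W|)$-Janson. $\mathcal B'(\mathbf H)$: graphs $G$ for which there are $S\subset V(G)$ with $|S|\ge\delta^{2/3}v(G)$ and $c:E(G[S])\to[r]$ with $\mathfrak I_{H_i,G_i,G}[S]$ not $(p,2^{-9}r^{-1}\delta p\,v(G))$-Janson for all $i$. $\mathbf S(G)$: the set of pairs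 $(S,c)$ with $S\subset V(G)$, $|S|\ge\delta^{2/3}N$, $c:E(G[S])\to[r]$, such that $\mathfrak I_{H_i,G_i,G}[S]$ is not $(p,2^{-9}r^{-1}\delta pN)$-Janson for every $i\in[r]$. *)

theory Defs
  imports "HOL-Analysis.Analysis"
begin

type_synonym 'a graph = "'a set \<times> 'a set set"

definition verts :: "'a graph \<Rightarrow> 'a set" where "verts G = fst G"
definition edges :: "'a graph \<Rightarrow> 'a set set" where "edges G = snd G"

definition wf_graph :: "'a graph \<Rightarrow> bool" where
  "wf_graph G \<longleftrightarrow> finite (verts G) \<and> (\<forall>e\<in>edges G. e \<subseteq> verts G \<and> card e = 2)"

definition nv :: "'a graph \<Rightarrow> nat" where "nv G = card (verts G)"

definition induced :: "'a graph \<Rightarrow> 'a set \<Rightarrow> 'a graph" where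
  "induced G L = (L, {e \<in> edges G. e \<subseteq> L})"

definition graph_iso :: "'a graph \<Rightarrow> 'b graph \<Rightarrow> bool" where
  "graph_iso G F \<longleftrightarrow> (\<exists>f. bij_betw f (verts G) (verts F) \<and>
     (\<forall>x\<in>verts G. \<forall>y\<in>verts G. {x, y} \<in> edges G \<longleftrightarrow> {f x, f y} \<in> edges F))"

definition colour_class :: "'a graph \<Rightarrow> 'a set \<Rightarrow> ('a set \<Rightarrow> nat) \<Rightarrow> nat \<Rightarrow> 'a graph" where
  "colour_class G S c i = (verts G, {e \<in> edges (induced G S). c e = i})"

definition is_colouring :: "'a graph \<Rightarrow> 'a set \<Rightarrow> nat \<Rightarrow> ('a set \<Rightarrow> nat) \<Rightarrow> bool" where
  "is_colouring G S r c \<longleftrightarrow> (\<forall>e\<in>edges (induced G S). c e \<in> {1..r})"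

text \<open>Hypergraphs are identified with their edge sets.\<close>
type_synonym 'a hypergraph = "'a set set"

definition restrict_hg :: "'a hypergraph \<Rightarrow> 'a set \<Rightarrow> 'a hypergraph" where
  "restrict_hg \<G> W = {E \<in> \<G>. E \<subseteq> W}"

definition frakI :: "'b graph \<Rightarrow> 'a graph \<Rightarrow> 'a graph \<Rightarrow> 'a hypergraph" where
  "frakI F G' G = {L. L \<subseteq> verts G \<and> edges (induced G' L) = edges (induced G L)
                      \<and> graph_iso (induced G L) F}"

definition e_nu :: "'a hypergraph \<Rightarrow> ('a set \<Rightarrow> real) \<Rightarrow> real" where
  "e_nu \<G> \<nu> = (\<Sum>E\<in>\<G>. \<nu> E)"

definition d_nu :: "'a hypergraph \<Rightarrow> ('a set \<Rightarrow> real) \<Rightarrow> 'a set \<Rightarrow> real" where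
  "d_nu \<G> \<nu> L = (\<Sum>E\<in>{E \<in> \<G>. L \<subseteq> E}. \<nu> E)"

text \<open>Sum over L with |L| \<ge> 2 contained in the vertex set of the hypergraph; terms with L
  not contained in any edge vanish, so taking the union of the edges as vertex set is harmless.\<close>
definition Lambda_p :: "real \<Rightarrow> 'a hypergraph \<Rightarrow> ('a set \<Rightarrow> real) \<Rightarrow> real" where
  "Lambda_p p \<G> \<nu> = (\<Sum>L\<in>{L. L \<subseteq> \<Union>\<G> \<and> card L \<ge> 2}. (d_nu \<G> \<nu> L)^2 / p ^ card L)"

definition janson :: "real \<Rightarrow> real \<Rightarrow> 'a hypergraph \<Rightarrow> bool" where
  "janson p R \<G> \<longleftrightarrow> (R > 0 \<longrightarrow>
     (\<exists>\<nu>. (\<forall>E\<in>\<G>. \<nu> E \<ge> 0) \<and> Lambda_p p \<G> \<nu> < (e_nu \<G> \<nu>)^2 / R))"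

definition Cconst :: nat where "Cconst = 300"
definition delta :: "nat \<Rightarrow> real" where "delta r = 1 / real r ^ 50"
definition pconst :: "nat \<Rightarrow> nat \<Rightarrow> real" where
  "pconst k r = 1 / (2^25 * real k ^ 2 * real r ^ 4)"

definition classE :: "nat \<Rightarrow> nat \<Rightarrow> (nat \<Rightarrow> nat) \<Rightarrow> 'a graph \<Rightarrow> bool" where
  "classE k r s G \<longleftrightarrow>
    (let t = (\<Sum>i=1..r. s i); p = pconst k r in
     \<forall>t' < t. \<forall>F :: nat \<Rightarrow> nat graph.
       (\<forall>i\<in>{1..r}. wf_graph (F i) \<and> nv (F i) \<le> s i) \<and> (\<Sum>i=1..r. nv (F i)) = t' \<longrightarrow>
       (\<forall>W c. W \<subseteq> verts G \<and> real (card W) \<ge> (delta r / (8 * r)) ^ (t - t') * real (nv G)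
              \<and> is_colouring G W r c \<longrightarrow>
          (\<exists>i\<in>{1..r}. janson p (p * card W)
             (restrict_hg (frakI (F i) (colour_class G W c i) G) W))))"

definition SG :: "nat \<Rightarrow> nat \<Rightarrow> (nat \<Rightarrow> 'b graph) \<Rightarrow> 'a graph \<Rightarrow> ('a set \<times> ('a set \<Rightarrow> nat)) set" where
  "SG k r H G = {(S, c). S \<subseteq> verts G \<and> real (card S) \<ge> delta r powr (2/3) * real (nv G)
       \<and> is_colouring G S r c
       \<and> (\<forall>i\<in>{1..r}. \<not> janson (pconst k r) (2 powr (-9) / r * delta r * pconst k r * nv G)
                         (restrict_hg (frakI (H i) (colour_class G S c i) G) S))}"

definition classB' :: "nat \<Rightarrow> nat \<Rightarrow> (nat \<Rightarrow> 'b graph) \<Rightarrow> 'a graph \<Rightarrow> bool" where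
  "classB' k r H G \<longleftrightarrow> (\<exists>S c. S \<subseteq> verts G \<and> real (card S) \<ge> delta r powr (2/3) * real (nv G)
       \<and> is_colouring G S r c
       \<and> (\<forall>i\<in>{1..r}. \<not> janson (pconst k r) (2 powr (-9) / r * delta r * pconst k r * nv G)
                         (restrict_hg (frakI (H i) (colour_class G S c i) G) S)))"

end

theory Submission
  imports Defs
begin

text \<open>Grow \<open>U \<subseteq> S\<close> from a set of size \<open>\<lceil>\<delta>N\<rceil>\<close>, adding one vertex at a time and
  increasing by one the budget \<open>R\<^sub>i\<close> of a colour whose hypergraph stays \<open>(p, R\<^sub>i)\<close>-Janson.
  A pair \<open>(U, R)\<close> of maximal size reached this way satisfies (b) by maximality. Since the
  Janson property is inherited by larger vertex sets and weakens as \<open>R\<close> decreases,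
  \<open>R\<^sub>i\<close> stays below the threshold at which \<open>\<I>\<^sub>i[S]\<close> fails to be Janson, and
  \<open>|U| \<ge> \<delta>N\<close> turns this threshold into the bound \<open>p|U|/(2\<^sup>9r)\<close>.
  Only \<open>(S, c) \<in> \<^bold>S(G)\<close> is used.\<close>

lemma janson_antimono:
  assumes "R \<le> R'" and "janson p R' \<G>"
  shows "janson p R \<G>"
proof (cases "R > 0")
  case True
  then obtain \<nu> where \<nu>: "\<forall>E\<in>\<G>. \<nu> E \<ge> 0" "Lambda_p p \<G> \<nu> < (e_nu \<G> \<nu>)^2 / R'"
    using assms unfolding janson_def by auto
  have "(e_nu \<G> \<nu>)^2 / R' \<le> (e_nu \<G> \<nu>)^2 / R"
    using True assms(1) by (intro divide_left_mono) auto
  with \<nu> show ?thesis unfolding janson_def by force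
qed (simp add: janson_def)

lemma janson_mono:
  assumes fin: "finite (\<Union>\<G>')" and sub: "\<G> \<subseteq> \<G>'" and J: "janson p R \<G>"
  shows "janson p R \<G>'"
proof (cases "R > 0")
  case True
  then obtain \<nu> where \<nu>: "\<forall>E\<in>\<G>. \<nu> E \<ge> 0" "Lambda_p p \<G> \<nu> < (e_nu \<G> \<nu>)^2 / R"
    using J unfolding janson_def by blast
  define \<mu> where "\<mu> E = (if E \<in> \<G> then \<nu> E else 0)" for E
  have fin\<G>': "finite \<G>'"
    using fin by (simp add: finite_UnionD)
  have e: "e_nu \<G>' \<mu> = e_nu \<G> \<nu>"
    unfolding e_nu_def \<mu>_def
    by (rule sum.mono_neutral_cong_right) (use fin\<G>' sub in auto)
  have d: "d_nu \<G>' \<mu> L = d_nu \<G> \<nu> L" for L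
    unfolding d_nu_def \<mu>_def
    by (rule sum.mono_neutral_cong_right) (use fin\<G>' sub in auto)
  have "Lambda_p p \<G>' \<mu> = Lambda_p p \<G> \<nu>"
    unfolding Lambda_p_def d
  proof (rule sum.mono_neutral_right)
    show "finite {L. L \<subseteq> \<Union>\<G>' \<and> 2 \<le> card L}"
      using fin by (rule rev_finite_subset[OF finite_Pow_iff[THEN iffD2]]) auto
    show "\<forall>L \<in> {L. L \<subseteq> \<Union>\<G>' \<and> 2 \<le> card L} - {L. L \<subseteq> \<Union>\<G> \<and> 2 \<le> card L}.
        (d_nu \<G> \<nu> L)\<^sup>2 / p ^ card L = 0"
    proof
      fix L assume "L \<in> {L. L \<subseteq> \<Union>\<G>' \<and> 2 \<le> card L} - {L. L \<subseteq> \<Union>\<G> \<and> 2 \<le> card L}"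
      then have "{E \<in> \<G>. L \<subseteq> E} = {}" by blast
      then have "d_nu \<G> \<nu> L = 0" unfolding d_nu_def by (metis sum.empty)
      then show "(d_nu \<G> \<nu> L)\<^sup>2 / p ^ card L = 0" by simp
    qed
  qed (use sub in blast)
  moreover have "\<forall>E\<in>\<G>'. \<mu> E \<ge> 0" using \<nu> by (simp add: \<mu>_def)
  ultimately show ?thesis using \<nu> e unfolding janson_def by auto
qed (simp add: janson_def)

lemma janson_restrict_hg_mono:
  assumes "finite W" "U \<subseteq> W" "janson p R (restrict_hg \<G> U)"
  shows "janson p R (restrict_hg \<G> W)"
  by (rule janson_mono[OF _ _ assms(3)])
     (use assms(1,2) in \<open>auto simp: restrict_hg_def intro: rev_finite_subset\<close>)

lemma janson_restrict_hg_less: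
  assumes "finite S" "U \<subseteq> S" "janson p R (restrict_hg \<G> U)"
    and "\<not> janson p T (restrict_hg \<G> S)"
  shows "R < T"
proof (rule ccontr)
  assume "\<not> R < T"
  then have "janson p T (restrict_hg \<G> U)"
    using janson_antimono assms(3) by (metis not_less)
  then show False
    using janson_restrict_hg_mono assms by blast
qed

definition janson_admissible ::
    "real \<Rightarrow> 'i set \<Rightarrow> ('i \<Rightarrow> 'a hypergraph) \<Rightarrow> nat \<Rightarrow> 'a set \<Rightarrow> 'a set \<Rightarrow> ('i \<Rightarrow> nat) \<Rightarrow> bool"
  where
  "janson_admissible p A \<I> d S U R \<longleftrightarrow> U \<subseteq> S \<and> card U = d + (\<Sum>i\<in>A. R i)
     \<and> (\<forall>i\<in>A. janson p (R i) (restrict_hg (\<I> i) U))"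

lemma janson_admissible_initial:
  assumes "d \<le> card S"
  obtains U where "janson_admissible p A \<I> d S U (\<lambda>_. 0)"
proof -
  obtain U where "U \<subseteq> S" "card U = d"
    using obtain_subset_with_card_n[OF assms] by blast
  then show thesis
    using that by (simp add: janson_admissible_def janson_def)
qed

lemma janson_admissible_insert:
  assumes "finite S" "finite A" "janson_admissible p A \<I> d S U R"
    and i: "i \<in> A" and v: "v \<in> S - U"
    and J: "janson p (R i + 1) (restrict_hg (\<I> i) (insert v U))"
  shows "janson_admissible p A \<I> d S (insert v U) (R(i := R i + 1))"
proof -
  have U: "U \<subseteq> S" "card U = d + (\<Sum>i\<in>A. R i)"
    and JU: "\<forall>j\<in>A. janson p (R j) (restrict_hg (\<I> j) U)"
    using assms(3) by (auto simp: janson_admissible_def)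
  have "finite U" using U(1) assms(1) finite_subset by blast
  then have "card (insert v U) = card U + 1" using v by simp
  moreover have "(\<Sum>j\<in>A. (R(i := R i + 1)) j) = (\<Sum>j\<in>A. R j) + 1"
    using assms(2) i by (simp add: sum.remove)
  moreover have "janson p (R j) (restrict_hg (\<I> j) (insert v U))" if "j \<in> A" for j
    using janson_restrict_hg_mono JU that \<open>finite U\<close> by (meson finite_insert subset_insertI)
  ultimately show ?thesis
    using U v J by (auto simp: janson_admissible_def)
qed

lemma exists_maximal_janson_admissible:
  assumes S: "finite S" "d \<le> card S" and A: "finite A"
  obtains U R where "janson_admissible p A \<I> d S U R"
    and "\<forall>i\<in>A. \<forall>v\<in>S - U. \<not> janson p (R i + 1) (restrict_hg (\<I> i) (insert v U))"
proof -
  let ?P = "\<lambda>(U, R). janson_admissible p A \<I> d S U R"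
  obtain U0 where "janson_admissible p A \<I> d S U0 (\<lambda>_. 0)"
    by (rule janson_admissible_initial[OF S(2)])
  then have "?P (U0, \<lambda>_. 0)" by simp
  moreover have "card (fst y) < card S + 1" if "?P y" for y
  proof -
    have "fst y \<subseteq> S" using that by (auto simp: janson_admissible_def split: prod.splits)
    then have "card (fst y) \<le> card S" by (rule card_mono[OF S(1)])
    then show ?thesis by simp
  qed
  ultimately obtain y where "?P y" and max: "\<And>z. ?P z \<Longrightarrow> card (fst z) \<le> card (fst y)"
    using ex_has_greatest_nat[of ?P "(U0, \<lambda>_. 0)" "\<lambda>y. card (fst y)" "card S + 1"] by blast
  obtain U R where y: "y = (U, R)" by (cases y)
  have adm: "janson_admissible p A \<I> d S U R" using \<open>?P y\<close> y by simp
  have "finite U" using adm S(1) finite_subset by (auto simp: janson_admissible_def)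
  have "\<not> janson p (R i + 1) (restrict_hg (\<I> i) (insert v U))" if "i \<in> A" "v \<in> S - U" for i v
  proof
    assume "janson p (R i + 1) (restrict_hg (\<I> i) (insert v U))"
    then have "?P (insert v U, R(i := R i + 1))"
      using janson_admissible_insert[OF S(1) A adm that] by simp
    then have "card (insert v U) \<le> card U" using max[of "(insert v U, _)"] y by fastforce
    then show False using that(2) \<open>finite U\<close> by simp
  qed
  with adm show thesis using that by blast
qed

theorem lemma6p6:
  fixes k r N :: nat and s :: "nat \<Rightarrow> nat" and H :: "nat \<Rightarrow> 'b graph" and G :: "'a graph"
    and S :: "'a set" and c :: "'a set \<Rightarrow> nat"
  assumes r2: "r \<ge> 2"
    and sk: "\<forall>i\<in>{1..r}. s i \<le> k"
    and H: "\<forall>i\<in>{1..r}. wf_graph (H i) \<and> nv (H i) \<le> s i"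
    and N: "N \<ge> r ^ (Cconst * (k + (\<Sum>i=1..r. s i)))"
    and G: "wf_graph G" "nv G = N"
    and GB: "classB' k r H G" and GE: "classE k r s G"
    and Sc: "(S, c) \<in> SG k r H G"
  shows "\<exists>U (R :: nat \<Rightarrow> nat). U \<subseteq> S \<and>
     real (card U) = of_int \<lceil>delta r * N\<rceil> + real (\<Sum>i=1..r. R i) \<and>
     (\<forall>i\<in>{1..r}. R i \<le> pconst k r * card U / (2^9 * r)) \<and>
     (\<forall>i\<in>{1..r}. janson (pconst k r) (R i) (restrict_hg (frakI (H i) (colour_class G S c i) G) U)
        \<and> (\<forall>v\<in>S - U. \<not> janson (pconst k r) (R i + 1)
               (restrict_hg (frakI (H i) (colour_class G S c i) G) (U \<union> {v}))))"
proof -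
  define p where "p = pconst k r"
  define \<I> where "\<I> i = frakI (H i) (colour_class G S c i) G" for i
  define T where "T = 2 powr (-9) / r * delta r * p * N"
  have S: "S \<subseteq> verts G" "delta r powr (2/3) * N \<le> card S"
    and not_janson: "\<forall>i\<in>{1..r}. \<not> janson p T (restrict_hg (\<I> i) S)"
    using Sc G(2) unfolding SG_def \<I>_def p_def T_def by auto
  have "finite S" using S(1) G(1) finite_subset by (auto simp: wf_graph_def)
  have \<delta>: "0 < delta r" "delta r \<le> 1" using r2 by (auto simp: delta_def)
  then have "delta r * N \<le> delta r powr (2/3) * N"
    using powr_mono'[of "2/3" 1 "delta r"] by (intro mult_right_mono) auto
  then have "nat \<lceil>delta r * N\<rceil> \<le> card S" using S(2) by linarith
  then obtain U R where adm: "janson_admissible p {1..r} \<I> (nat \<lceil>delta r * N\<rceil>) S U R"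
    and max: "\<forall>i\<in>{1..r}. \<forall>v\<in>S - U. \<not> janson p (R i + 1) (restrict_hg (\<I> i) (insert v U))"
    using exists_maximal_janson_admissible[OF \<open>finite S\<close>] by blast
  have U: "U \<subseteq> S" "real (card U) = of_int \<lceil>delta r * N\<rceil> + real (\<Sum>i=1..r. R i)"
    and JU: "\<forall>i\<in>{1..r}. janson p (R i) (restrict_hg (\<I> i) U)"
    using adm \<delta>(1) by (auto simp: janson_admissible_def)
  have "delta r * N \<le> card U"
    using U(2) le_of_int_ceiling[of "delta r * N"] by linarith
  then have "p * (delta r * N) / (2^9 * r) \<le> p * card U / (2^9 * r)"
    by (intro divide_right_mono mult_left_mono) (auto simp: p_def pconst_def)
  moreover have "T = p * (delta r * N) / (2^9 * r)"
    by (simp add: T_def powr_minus_divide powr_realpow)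
  ultimately have "T \<le> p * card U / (2^9 * r)" by simp
  then have "R i \<le> p * card U / (2^9 * r)" if "i \<in> {1..r}" for i
    using janson_restrict_hg_less[OF \<open>finite S\<close> U(1)] JU not_janson that
    by (meson less_eq_real_def order_trans)
  then show ?thesis
    using U JU max unfolding p_def \<I>_def by (intro exI[of _ U] exI[of _ R]) auto
qed

end
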